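(* Under the setting of Theorem 1, the cross entropy between the data and learned distributions satisfies $$H(p_0,p_0^\theta)\le \int_0^1\mathbb{E}_{x_t\sim p_t}\sum_{y\neq x_t}Q_t(x_t,y)\,\bar\ell\!\left(\frac{p_t(y)}{p_t(x_t)},\,s_\theta(x_t,t)_y\right)dt-\int_0^1\mathbb{E}_{x_t\sim p_t}\sum_{y\neq x_t}Q_t(y,x_t)\,dt+H(p_1,p_r).$$
   Context: Finite state space $\mathcal{X}$; $(Q_t)_{t\in[0,1]}$ transition-rate matrices (nonnegative off-diagonal entries, columns summing to zero, $Q_t(x,y)$ for $x\ne y$ is the rate of jumping from $y$ to $x$). The forward process has marginals $p_t$ solving $\frac{d}{dt}p_t=Q_tp_t$ from the data distribution $p_0$; the true reverse process (from $t=1$ to $0$, started from $p_1$, jump rate $Q_t(x,y)p_t(y)/p_t(x)$ from $x$ to $y$) has marginals $p_t$. A model $s_\theta(x,t)_y>0$ ($x\ne y$) is given; the learned reverse process (from $t=1$ to $0$, started from reference distribution $p_r$, jump rate $Q_t(x,y)s_\theta(x,t)_y$ from $x$ to $y\ne x$) has marginals $p^\theta_t$. $H(p,q)=-\sum_x p(x)\log q(x)$ is the cross entropy, and $\bar\ell(a,b)=b-a\log b$. *)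

theory Defs
  imports "HOL-Analysis.Analysis"
begin

definition cross_entropy :: "('x::finite \<Rightarrow> real) \<Rightarrow> ('x \<Rightarrow> real) \<Rightarrow> real" where
  "cross_entropy p q = - (\<Sum>x\<in>UNIV. p x * ln (q x))"

definition lbar :: "real \<Rightarrow> real \<Rightarrow> real" where
  "lbar a b = b - a * ln b"

text \<open>Transition-rate matrix: Q x y (x \<noteq> y) is the rate of jumping from y to x;
  off-diagonal entries nonnegative, columns sum to zero.\<close>
definition rate_matrix :: "('x::finite \<Rightarrow> 'x \<Rightarrow> real) \<Rightarrow> bool" where
  "rate_matrix Q \<longleftrightarrow> (\<forall>x y. x \<noteq> y \<longrightarrow> 0 \<le> Q x y) \<and> (\<forall>y. (\<Sum>x\<in>UNIV. Q x y) = 0)"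

end

theory Submission
  imports Defs
begin

(*
  Let F(t) = sum_x p_t(x) log p^theta_t(x). Using the forward equation for p_t, the backward
  equation for p^theta_t and the zero column sums of Q_t, both F'(t) and the integrands on the
  right become sums over pairs x ~= y, and the integrands minus F'(t) equal
  sum_{x ~= y} Q_t(x,y) p_t(y) (u - 1 - log u) with u = s_theta(x,t)_y p^theta_t(x) / p^theta_t(y),
  which is nonnegative. Integrating over [0,1] gives the claim, since H(p_0, p^theta_0) = -F(0)
  and H(p_1, p_r) = -F(1). The logarithms make sense because p^theta_t stays positive: the
  backward equation is linear with nonnegative coupling, so at the last time some coordinate
  vanishes an integrating factor shows that it is in fact positive.
*)

lemma pos_if_deriv_le_linear:
  fixes f f' lam :: "real \<Rightarrow> real"
  assumes "a \<le> b" and lam: "continuous_on {a..b} lam"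
    and f: "\<And>u. u \<in> {a..b} \<Longrightarrow> (f has_real_derivative f' u) (at u within {a..b})"
    and le: "\<And>u. a < u \<Longrightarrow> u < b \<Longrightarrow> f' u \<le> lam u * f u"
    and "f b > 0"
  shows "f a > 0"
proof -
  define L where "L u = integral {a..u} lam" for u
  define h where "h u = f u * exp (- L u)" for u
  have h: "(h has_real_derivative (f' u - lam u * f u) * exp (- L u)) (at u within {a..b})"
    if u: "u \<in> {a..b}" for u
  proof -
    have "(L has_real_derivative lam u) (at u within {a..b})"
      unfolding L_def by (rule integral_has_real_derivative[OF lam u])
    then show ?thesis
      unfolding h_def using f[OF u] by (auto intro!: derivative_eq_intros simp: algebra_simps)
  qed
  have "h b \<le> h a"
  proof (rule DERIV_nonpos_imp_decreasing_open[OF \<open>a \<le> b\<close>])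
    show "continuous_on {a..b} h"
      using DERIV_continuous_on[OF h] .
    fix u assume u: "a < u" "u < b"
    then have "at u within {a..b} = at u"
      by (intro at_within_interior) auto
    with h[of u] u le[OF u] show "\<exists>y. DERIV h u :> y \<and> y \<le> 0"
      by (auto intro!: mult_nonpos_nonneg)
  qed
  moreover have "h b > 0"
    using \<open>f b > 0\<close> by (simp add: h_def)
  ultimately have "h a > 0"
    by linarith
  then show ?thesis
    by (simp add: h_def zero_less_mult_iff)
qed

lemma backward_linear_ode_pos:
  fixes R :: "real \<Rightarrow> 'x::finite \<Rightarrow> real" and lam :: "real \<Rightarrow> 'x \<Rightarrow> real"
    and c :: "real \<Rightarrow> 'x \<Rightarrow> 'x \<Rightarrow> real"
  assumes R_end: "\<And>x. R b x > 0"
    and R_deriv: "\<And>t x. t \<in> {a..b} \<Longrightarrow> ((\<lambda>u. R u x) has_real_derivative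
          (- (\<Sum>y\<in>UNIV - {x}. c t y x * R t y) + lam t x * R t x)) (at t within {a..b})"
    and c_nonneg: "\<And>t x y. t \<in> {a..b} \<Longrightarrow> x \<noteq> y \<Longrightarrow> 0 \<le> c t y x"
    and lam_cont: "\<And>x. continuous_on {a..b} (\<lambda>t. lam t x)"
    and t: "t \<in> {a..b}"
  shows "R t x > 0"
proof (rule ccontr)
  assume "\<not> R t x > 0"
  define T where "T = (\<Union>y. {u \<in> {a..b}. R u y \<le> 0})"
  have "closed {u \<in> {a..b}. R u y \<le> 0}" for y
    using DERIV_continuous_on[OF R_deriv]
    by (intro continuous_on_closed_Collect_le continuous_on_const) auto
  then have "compact T"
    unfolding T_def compact_eq_bounded_closed
    by (intro conjI closed_UN bounded_subset[OF bounded_cbox]) auto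
  moreover have "T \<noteq> {}"
    using t \<open>\<not> R t x > 0\<close> by (auto simp: T_def not_less)
  ultimately obtain t0 where "t0 \<in> T" and last: "\<And>u. u \<in> T \<Longrightarrow> u \<le> t0"
    using compact_attains_sup by metis
  then obtain y0 where y0: "R t0 y0 \<le> 0" and t0: "t0 \<in> {a..b}"
    by (auto simp: T_def)
  have "R u y > 0" if "t0 < u" "u \<le> b" for u y
  proof (rule ccontr)
    assume "\<not> R u y > 0"
    then have "u \<in> T"
      using that t0 by (auto simp: T_def not_less)
    with last that show False
      by fastforce
  qed
  then have flux_nonneg: "0 \<le> (\<Sum>y\<in>UNIV - {y0}. c u y y0 * R u y)" if "t0 < u" "u < b" for u
    using that t0 by (intro sum_nonneg mult_nonneg_nonneg c_nonneg less_imp_le) auto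
  have "R t0 y0 > 0"
  proof (rule pos_if_deriv_le_linear[where f = "\<lambda>u. R u y0" and a = t0 and b = b
        and lam = "\<lambda>u. lam u y0"
        and f' = "\<lambda>u. - (\<Sum>y\<in>UNIV - {y0}. c u y y0 * R u y) + lam u y0 * R u y0"])
    show "continuous_on {t0..b} (\<lambda>u. lam u y0)"
      using t0 by (auto intro: continuous_on_subset[OF lam_cont])
    show "((\<lambda>u. R u y0) has_real_derivative
        - (\<Sum>y\<in>UNIV - {y0}. c u y y0 * R u y) + lam u y0 * R u y0) (at u within {t0..b})"
      if "u \<in> {t0..b}" for u
      using that t0 by (intro DERIV_subset[OF R_deriv]) auto
  qed (use t0 R_end flux_nonneg in auto)
  with y0 show False
    by simp
qed

lemma sum_offdiag_swap:
  fixes f :: "'x::finite \<Rightarrow> 'x \<Rightarrow> 'a::comm_monoid_add"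
  shows "(\<Sum>x\<in>UNIV. \<Sum>y\<in>UNIV - {x}. f x y) = (\<Sum>x\<in>UNIV. \<Sum>y\<in>UNIV - {x}. f y x)"
proof -
  have offdiag: "(\<Sum>y\<in>UNIV - {x}. g y) = (\<Sum>y\<in>UNIV. if y = x then 0 else g y)"
    for x and g :: "'x \<Rightarrow> 'a"
    by (subst sum.remove[of UNIV x]) (auto intro!: sum.cong)
  show ?thesis
    unfolding offdiag by (subst sum.swap) (auto intro!: sum.cong)
qed

lemma rate_matrix_sum_mult:
  assumes "rate_matrix q"
  shows "(\<Sum>x\<in>UNIV. (\<Sum>y\<in>UNIV. q x y * P y) * g x)
       = (\<Sum>x\<in>UNIV. \<Sum>y\<in>UNIV - {x}. q x y * P y * (g x - g y))"
proof -
  have col: "(\<Sum>x\<in>UNIV. q x y * g x) = (\<Sum>x\<in>UNIV - {y}. q x y * (g x - g y))" for y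
  proof -
    have "(\<Sum>x\<in>UNIV. q x y * (g x - g y)) = (\<Sum>x\<in>UNIV. q x y * g x) - g y * (\<Sum>x\<in>UNIV. q x y)"
      by (simp add: algebra_simps sum_subtractf sum_distrib_left)
    then have "(\<Sum>x\<in>UNIV. q x y * g x) = (\<Sum>x\<in>UNIV. q x y * (g x - g y))"
      using assms by (simp add: rate_matrix_def)
    also have "\<dots> = (\<Sum>x\<in>UNIV - {y}. q x y * (g x - g y))"
      by (subst sum.remove[of UNIV y]) auto
    finally show ?thesis .
  qed
  have "(\<Sum>x\<in>UNIV. (\<Sum>y\<in>UNIV. q x y * P y) * g x) = (\<Sum>x\<in>UNIV. \<Sum>y\<in>UNIV. P y * (q x y * g x))"
    by (simp add: sum_distrib_left sum_distrib_right mult_ac)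
  also have "\<dots> = (\<Sum>y\<in>UNIV. P y * (\<Sum>x\<in>UNIV. q x y * g x))"
    by (subst sum.swap) (simp add: sum_distrib_left)
  also have "\<dots> = (\<Sum>y\<in>UNIV. \<Sum>x\<in>UNIV - {y}. q x y * P y * (g x - g y))"
    unfolding col by (simp add: sum_distrib_left mult_ac)
  also have "\<dots> = (\<Sum>x\<in>UNIV. \<Sum>y\<in>UNIV - {x}. q x y * P y * (g x - g y))"
    by (rule sum_offdiag_swap)
  finally show ?thesis .
qed

(* The right-hand side of the Kolmogorov equation of the learned reverse process at a fixed time,
   with s x y standing for s_theta(x,t)_y. *)
definition reverse_drift ::
    "('x::finite \<Rightarrow> 'x \<Rightarrow> real) \<Rightarrow> ('x \<Rightarrow> 'x \<Rightarrow> real) \<Rightarrow> ('x \<Rightarrow> real) \<Rightarrow> 'x \<Rightarrow> real"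
  where "reverse_drift q s R x =
    - (\<Sum>y\<in>UNIV - {x}. q y x * s y x * R y) + (\<Sum>y\<in>UNIV - {x}. q x y * s x y) * R x"

lemma reverse_drift_solution_pos:
  fixes R :: "real \<Rightarrow> 'x::finite \<Rightarrow> real"
  assumes Q_rate: "\<And>t. t \<in> {a..b} \<Longrightarrow> rate_matrix (Q t)"
    and Q_cont: "\<And>x y. continuous_on {a..b} (\<lambda>t. Q t x y)"
    and s_pos: "\<And>t x y. t \<in> {a..b} \<Longrightarrow> x \<noteq> y \<Longrightarrow> 0 < s t x y"
    and s_cont: "\<And>x y. continuous_on {a..b} (\<lambda>t. s t x y)"
    and R_end: "\<And>x. R b x > 0"
    and R_deriv: "\<And>t x. t \<in> {a..b} \<Longrightarrow>
          ((\<lambda>u. R u x) has_real_derivative reverse_drift (Q t) (s t) (R t) x) (at t within {a..b})"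
    and t: "t \<in> {a..b}"
  shows "R t x > 0"
proof (rule backward_linear_ode_pos[where c = "\<lambda>t y x. Q t y x * s t y x"
      and lam = "\<lambda>t x. \<Sum>y\<in>UNIV - {x}. Q t x y * s t x y" and R = R and a = a and b = b,
      OF R_end _ _ _ t])
  show "0 \<le> Q t y x * s t y x" if "t \<in> {a..b}" "x \<noteq> y" for t x y
    using Q_rate[OF that(1)] s_pos[of t y x] that by (simp add: rate_matrix_def less_imp_le)
  show "((\<lambda>u. R u x) has_real_derivative
      - (\<Sum>y\<in>UNIV - {x}. Q t y x * s t y x * R t y) + (\<Sum>y\<in>UNIV - {x}. Q t x y * s t x y) * R t x)
      (at t within {a..b})" if "t \<in> {a..b}" for t x
    using R_deriv[OF that] by (simp add: reverse_drift_def)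
qed (intro continuous_intros Q_cont s_cont)

lemma sum_reverse_drift_div:
  assumes "\<And>x. R x \<noteq> 0"
  shows "(\<Sum>x\<in>UNIV. P x * reverse_drift q s R x / R x)
       = (\<Sum>x\<in>UNIV. \<Sum>y\<in>UNIV - {x}. q x y * s x y * (P x - R x * P y / R y))"
proof -
  have "P x * reverse_drift q s R x / R x
      = (\<Sum>y\<in>UNIV - {x}. q x y * s x y * P x) - (\<Sum>y\<in>UNIV - {x}. q y x * s y x * (R y * P x / R x))"
    for x
    using assms[of x] by (simp add: reverse_drift_def field_simps sum_distrib_left sum_distrib_right
        sum_divide_distrib)
  then have "(\<Sum>x\<in>UNIV. P x * reverse_drift q s R x / R x)
      = (\<Sum>x\<in>UNIV. \<Sum>y\<in>UNIV - {x}. q x y * s x y * P x)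
      - (\<Sum>x\<in>UNIV. \<Sum>y\<in>UNIV - {x}. q y x * s y x * (R y * P x / R x))"
    by (simp add: sum_subtractf)
  also have "(\<Sum>x\<in>UNIV. \<Sum>y\<in>UNIV - {x}. q y x * s y x * (R y * P x / R x))
      = (\<Sum>x\<in>UNIV. \<Sum>y\<in>UNIV - {x}. q x y * s x y * (R x * P y / R y))"
    by (rule sum_offdiag_swap)
  finally show ?thesis
    by (simp add: right_diff_distrib sum_subtractf)
qed

lemma log_likelihood_rate_le:
  fixes q :: "'x::finite \<Rightarrow> 'x \<Rightarrow> real"
  assumes q: "rate_matrix q" and P: "\<And>x. P x > 0" and R: "\<And>x. R x > 0"
    and s: "\<And>x y. x \<noteq> y \<Longrightarrow> s x y > 0"
  shows "(\<Sum>x\<in>UNIV. (\<Sum>y\<in>UNIV. q x y * P y) * ln (R x) + P x * reverse_drift q s R x / R x)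
      \<le> (\<Sum>x\<in>UNIV. P x * (\<Sum>y\<in>UNIV - {x}. q x y * lbar (P y / P x) (s x y)))
       - (\<Sum>x\<in>UNIV. P x * (\<Sum>y\<in>UNIV - {x}. q y x))"
proof -
  have lhs: "(\<Sum>x\<in>UNIV. (\<Sum>y\<in>UNIV. q x y * P y) * ln (R x) + P x * reverse_drift q s R x / R x)
      = (\<Sum>x\<in>UNIV. \<Sum>y\<in>UNIV - {x}.
           q x y * P y * (ln (R x) - ln (R y)) + q x y * s x y * (P x - R x * P y / R y))"
    using rate_matrix_sum_mult[OF q] sum_reverse_drift_div[of R] R
    by (simp add: sum.distrib less_imp_neq[symmetric])
  have "P x * (\<Sum>y\<in>UNIV - {x}. q x y * lbar (P y / P x) (s x y))
      = (\<Sum>y\<in>UNIV - {x}. q x y * (s x y * P x - P y * ln (s x y)))" for x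
    unfolding sum_distrib_left using P[of x] by (intro sum.cong) (auto simp: lbar_def field_simps)
  moreover have "(\<Sum>x\<in>UNIV. P x * (\<Sum>y\<in>UNIV - {x}. q y x))
      = (\<Sum>x\<in>UNIV. \<Sum>y\<in>UNIV - {x}. q x y * P y)"
    unfolding sum_distrib_left by (subst sum_offdiag_swap) (simp add: mult.commute)
  ultimately have rhs: "(\<Sum>x\<in>UNIV. P x * (\<Sum>y\<in>UNIV - {x}. q x y * lbar (P y / P x) (s x y)))
       - (\<Sum>x\<in>UNIV. P x * (\<Sum>y\<in>UNIV - {x}. q y x))
      = (\<Sum>x\<in>UNIV. \<Sum>y\<in>UNIV - {x}. q x y * (s x y * P x - P y * ln (s x y)) - q x y * P y)"
    by (simp add: sum_subtractf)
  have "q x y * P y * (ln (R x) - ln (R y)) + q x y * s x y * (P x - R x * P y / R y)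
      \<le> q x y * (s x y * P x - P y * ln (s x y)) - q x y * P y" if "x \<noteq> y" for x y
  proof -
    define u where "u = s x y * R x / R y"
    have "u > 0"
      using s[OF that] R[of x] R[of y] by (simp add: u_def)
    have ln_u: "ln u = ln (s x y) + ln (R x) - ln (R y)"
      using s[OF that] R[of x] R[of y] by (simp add: u_def ln_mult ln_div)
    have "q x y * (s x y * P x - P y * ln (s x y)) - q x y * P y
        - (q x y * P y * (ln (R x) - ln (R y)) + q x y * s x y * (P x - R x * P y / R y))
        = q x y * P y * (u - 1 - ln u)"
      unfolding ln_u using R[of y] by (simp add: u_def field_simps)
    moreover have "0 \<le> q x y * P y * (u - 1 - ln u)"
      using q that P[of y] ln_le_minus_one[OF \<open>u > 0\<close>]
      by (intro mult_nonneg_nonneg) (auto simp: rate_matrix_def less_imp_le)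
    ultimately show ?thesis
      by linarith
  qed
  then show ?thesis
    unfolding lhs rhs by (intro sum_mono) auto
qed

lemma has_real_derivative_sum_mult_ln:
  fixes p R :: "real \<Rightarrow> 'x::finite \<Rightarrow> real"
  assumes "\<And>x. ((\<lambda>u. p u x) has_real_derivative p' x) (at t within S)"
    and "\<And>x. ((\<lambda>u. R u x) has_real_derivative R' x) (at t within S)"
    and "\<And>x. R t x > 0"
  shows "((\<lambda>u. \<Sum>x\<in>UNIV. p u x * ln (R u x)) has_real_derivative
           (\<Sum>x\<in>UNIV. p' x * ln (R t x) + p t x * R' x / R t x)) (at t within S)"
  using assms by (auto intro!: derivative_eq_intros simp: mult.commute)

lemma diff_le_integral_of_deriv_le:
  fixes F F' g :: "real \<Rightarrow> real"
  assumes "a \<le> b"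
    and "\<And>t. t \<in> {a..b} \<Longrightarrow> (F has_real_derivative F' t) (at t within {a..b})"
    and "\<And>t. t \<in> {a..b} \<Longrightarrow> F' t \<le> g t"
    and "g integrable_on {a..b}"
  shows "F b - F a \<le> integral {a..b} g"
  using assms
  by (intro has_integral_le[OF fundamental_theorem_of_calculus integrable_integral])
     (auto simp flip: has_real_derivative_iff_has_vector_derivative)

theorem theorem4:
  fixes Q :: "real \<Rightarrow> 'x::finite \<Rightarrow> 'x \<Rightarrow> real"
    and p :: "real \<Rightarrow> 'x \<Rightarrow> real"
    and s :: "'x \<Rightarrow> real \<Rightarrow> 'x \<Rightarrow> real"
    and pth :: "real \<Rightarrow> 'x \<Rightarrow> real"
    and pr :: "'x \<Rightarrow> real"
  assumes Q_rate: "\<And>t. t \<in> {0..1} \<Longrightarrow> rate_matrix (Q t)"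
    and Q_cont: "\<And>x y. continuous_on {0..1} (\<lambda>t. Q t x y)"
    and p0_distr: "(\<Sum>x\<in>UNIV. p 0 x) = 1"
    and p_pos: "\<And>t x. t \<in> {0..1} \<Longrightarrow> 0 < p t x"
    and p_forward: "\<And>t x. t \<in> {0..1} \<Longrightarrow>
        ((\<lambda>u. p u x) has_real_derivative (\<Sum>y\<in>UNIV. Q t x y * p t y)) (at t within {0..1})"
    and s_pos: "\<And>x t y. t \<in> {0..1} \<Longrightarrow> x \<noteq> y \<Longrightarrow> 0 < s x t y"
    and s_cont: "\<And>x y. continuous_on {0..1} (\<lambda>t. s x t y)"
    and pr_pos: "\<And>x. 0 < pr x"
    and pr_distr: "(\<Sum>x\<in>UNIV. pr x) = 1"
    and pth_init: "pth 1 = pr"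
    and pth_backward: "\<And>t x. t \<in> {0..1} \<Longrightarrow>
        ((\<lambda>u. pth u x) has_real_derivative
          (- (\<Sum>y\<in>UNIV - {x}. Q t y x * s y t x * pth t y)
           + (\<Sum>y\<in>UNIV - {x}. Q t x y * s x t y) * pth t x)) (at t within {0..1})"
  shows "cross_entropy (p 0) (pth 0) \<le>
           integral {0..1} (\<lambda>t. \<Sum>x\<in>UNIV. p t x *
              (\<Sum>y\<in>UNIV - {x}. Q t x y * lbar (p t y / p t x) (s x t y)))
         - integral {0..1} (\<lambda>t. \<Sum>x\<in>UNIV. p t x * (\<Sum>y\<in>UNIV - {x}. Q t y x))
         + cross_entropy (p 1) pr"
proof -
  have pth_deriv: "((\<lambda>u. pth u x) has_real_derivative reverse_drift (Q t) (\<lambda>x y. s x t y) (pth t) x)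
      (at t within {0..1})" if "t \<in> {0..1}" for t x
    using pth_backward[OF that] by (simp add: reverse_drift_def)
  have pth_pos: "pth t x > 0" if "t \<in> {0..1}" for t x
    by (rule reverse_drift_solution_pos[where s = "\<lambda>t x y. s x t y" and R = pth and a = 0 and b = 1,
          OF Q_rate Q_cont s_pos s_cont _ pth_deriv that]) (use pth_init pr_pos in auto)
  define F where "F t = (\<Sum>x\<in>UNIV. p t x * ln (pth t x))" for t
  define A where
    "A t = (\<Sum>x\<in>UNIV. p t x * (\<Sum>y\<in>UNIV - {x}. Q t x y * lbar (p t y / p t x) (s x t y)))" for t
  define B where "B t = (\<Sum>x\<in>UNIV. p t x * (\<Sum>y\<in>UNIV - {x}. Q t y x))" for t
  have p_cont: "continuous_on {0..1} (\<lambda>t. p t x)" for x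
    by (rule DERIV_continuous_on[OF p_forward])
  have A_int: "A integrable_on {0..1}"
    unfolding A_def lbar_def using p_pos s_pos
    by (intro integrable_continuous_real continuous_intros Q_cont s_cont p_cont)
       (auto simp: less_imp_neq[symmetric])
  have B_int: "B integrable_on {0..1}"
    unfolding B_def by (intro integrable_continuous_real continuous_intros Q_cont p_cont)
  have "F 1 - F 0 \<le> integral {0..1} (\<lambda>t. A t - B t)"
  proof (rule diff_le_integral_of_deriv_le)
    fix t :: real assume t: "t \<in> {0..1}"
    show "(F has_real_derivative (\<Sum>x\<in>UNIV. (\<Sum>y\<in>UNIV. Q t x y * p t y) * ln (pth t x)
        + p t x * reverse_drift (Q t) (\<lambda>x y. s x t y) (pth t) x / pth t x)) (at t within {0..1})"
      unfolding F_def by (intro has_real_derivative_sum_mult_ln p_forward pth_deriv pth_pos t)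
    show "(\<Sum>x\<in>UNIV. (\<Sum>y\<in>UNIV. Q t x y * p t y) * ln (pth t x)
        + p t x * reverse_drift (Q t) (\<lambda>x y. s x t y) (pth t) x / pth t x) \<le> A t - B t"
      unfolding A_def B_def by (rule log_likelihood_rate_le) (use t Q_rate p_pos pth_pos s_pos in auto)
  qed (use integrable_diff[OF A_int B_int] in auto)
  also have "\<dots> = integral {0..1} A - integral {0..1} B"
    by (rule integral_diff[OF A_int B_int])
  finally show ?thesis
    by (simp add: cross_entropy_def F_def A_def[abs_def] B_def[abs_def] pth_init)
qed

end
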